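(* Under the setting and assumptions of the first-method model (F satisfying (A1)–(A3); $y_{kj}=\beta_k+sx_j+\delta_{kj}$, $k=0,\dots,d$, with $x_j=-\log\varepsilon_j$ for a strictly decreasing sequence of radii $\varepsilon_j>0$; zero-mean errors with finite positive variances whose covariance matrices $Q_n$ satisfy $0<\inf_n\nu_{\min}(Q_n)\le\sup_n\nu_{\max}(Q_n)=:\nu^*<\infty$), the least squares estimator $\hat\beta^{(n)}$ of $\beta=(\beta_0,\dots,\beta_d,s)^\top$ satisfies, for every $\varepsilon>0$ and $n\ge2$, $$P(|\hat\beta^{(n)}-\beta|>\varepsilon)\le\frac{4\nu^*}{\varepsilon^2(d+1)n}\big(1+\bar x_n^2+\widetilde S_n^2\big)\Big(\frac1{\widetilde S_n^2}+(d+1)\Big(1+\frac{\bar x_n^2}{\widetilde S_n^2}\Big)\Big)^2.$$ Moreover, if there are constants $\gamma,\mu\ge0$ with $\widetilde S_n^2=\Theta(n^\gamma)$ and $\bar x_n=O(n^{\mu/2})$ as $n\to\infty$, and $\alpha:=1-\max\{\gamma,\mu\}-2\max\{0,\mu-\gamma\}>0$, then $P(|\hat\beta^{(n)}-\beta|>\varepsilon)=O(n^{-\alpha})$ for every $\varepsilon>0$.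
   Context: $F_\varepsilon$ is the $\varepsilon$-parallel set of $F$; $C_k(F_\varepsilon)$ its $k$-th total curvature (intrinsic volume); $s$ is the Minkowski dimension of $F$. (A1): curvature measures of $F_\varepsilon$ well defined for a.e. $\varepsilon$; (A2): each $C_k(F_\varepsilon)$ has constant strict sign in $\varepsilon$; (A3): $\mathcal C_k(F)=\operatorname{ess\,lim}_{\varepsilon\searrow0}\varepsilon^{s-k}C_k(F_\varepsilon)$ exists for all $k$, and $\beta_k=\log|\mathcal C_k(F)|$. $\bar x_n=\frac1n\sum_{i\le n}x_i$, $\widetilde S_n^2=\frac1n\sum_{i\le n}(x_i-\bar x_n)^2$. $Q_n$ is the covariance matrix of $(\delta_{01},\dots,\delta_{d1},\dots,\delta_{0n},\dots,\delta_{dn})$. $\hat\beta^{(n)}$ minimizes $\sum_{k=0}^d\sum_{j=1}^n(y_{kj}-\beta_k-sx_j)^2$. $f=\Theta(g)$ means $c_1|g|\le|f|\le c_2|g|$ eventually for constants $c_1,c_2>0$. *)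

theory Defs
  imports "HOL-Probability.Probability" "HOL-Library.Landau_Symbols"
begin

text \<open>Square real matrices of size N are represented as functions nat => nat => real,
  only the entries with indices below N being relevant.\<close>

definition is_eigenvalue :: "nat \<Rightarrow> (nat \<Rightarrow> nat \<Rightarrow> real) \<Rightarrow> real \<Rightarrow> bool" where
  "is_eigenvalue N A lam \<longleftrightarrow>
     (\<exists>v::nat \<Rightarrow> real. (\<exists>i<N. v i \<noteq> 0) \<and> (\<forall>i<N. (\<Sum>j<N. A i j * v j) = lam * v i))"

definition nu_min :: "nat \<Rightarrow> (nat \<Rightarrow> nat \<Rightarrow> real) \<Rightarrow> real" where
  "nu_min N A = Min {lam. is_eigenvalue N A lam}"

definition nu_max :: "nat \<Rightarrow> (nat \<Rightarrow> nat \<Rightarrow> real) \<Rightarrow> real" where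
  "nu_max N A = Max {lam. is_eigenvalue N A lam}"

definition covar :: "'a measure \<Rightarrow> ('a \<Rightarrow> real) \<Rightarrow> ('a \<Rightarrow> real) \<Rightarrow> real" where
  "covar M X Y = (\<integral>\<omega>. (X \<omega> - (\<integral>\<eta>. X \<eta> \<partial>M)) * (Y \<omega> - (\<integral>\<eta>. Y \<eta> \<partial>M)) \<partial>M)"

text \<open>Covariance matrix Q_n of the vector
  (delta_01, ..., delta_d1, ..., delta_0n, ..., delta_dn): position p corresponds to
  k = p mod (d+1), j = p div (d+1) + 1. It has size (d+1)*n.\<close>
definition cov_matrix :: "'a measure \<Rightarrow> nat \<Rightarrow> (nat \<Rightarrow> nat \<Rightarrow> 'a \<Rightarrow> real) \<Rightarrow> nat \<Rightarrow> nat \<Rightarrow> real" where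
  "cov_matrix M d \<delta> p q =
     covar M (\<delta> (p mod (d+1)) (p div (d+1) + 1)) (\<delta> (q mod (d+1)) (q div (d+1) + 1))"

definition xbar :: "(nat \<Rightarrow> real) \<Rightarrow> nat \<Rightarrow> real" where
  "xbar x n = (1 / real n) * (\<Sum>i=1..n. x i)"

definition S2 :: "(nat \<Rightarrow> real) \<Rightarrow> nat \<Rightarrow> real" where
  "S2 x n = (1 / real n) * (\<Sum>i=1..n. (x i - xbar x n)^2)"

text \<open>Residual sum of squares of a parameter vector v = (beta_0,...,beta_d, s),
  stored as v 0, ..., v d, v (d+1).\<close>
definition RSS :: "nat \<Rightarrow> (nat \<Rightarrow> real) \<Rightarrow> (nat \<Rightarrow> nat \<Rightarrow> real) \<Rightarrow> nat \<Rightarrow> (nat \<Rightarrow> real) \<Rightarrow> real" where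
  "RSS d x y n v = (\<Sum>k=0..d. \<Sum>j=1..n. (y k j - v k - v (d+1) * x j)^2)"

definition lse :: "nat \<Rightarrow> (nat \<Rightarrow> real) \<Rightarrow> (nat \<Rightarrow> nat \<Rightarrow> real) \<Rightarrow> nat \<Rightarrow> nat \<Rightarrow> real" where
  "lse d x y n = (THE v. (\<forall>i>d+1. v i = 0) \<and> (\<forall>w. RSS d x y n v \<le> RSS d x y n w))"

definition pdist :: "nat \<Rightarrow> (nat \<Rightarrow> real) \<Rightarrow> (nat \<Rightarrow> real) \<Rightarrow> real" where
  "pdist d v w = sqrt (\<Sum>i=0..d+1. (v i - w i)^2)"

end

theory Submission
  imports Defs "Jordan_Normal_Form.Char_Poly"
begin

text \<open>The estimator has a closed form that is linear in the data and exact on noiseless data,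
  so each coordinate of its error is a fixed linear combination of the errors \<open>\<delta> k j\<close>. The
  second moment of such a combination is the quadratic form of \<open>Q\<^sub>n\<close> at its weight vector,
  hence at most \<open>\<nu>\<^sub>m\<^sub>a\<^sub>x(Q\<^sub>n)\<close> times the squared length of the weights (Rayleigh). Summed over
  the \<open>d + 2\<close> coordinates, the squared weights are exactly
  \<open>(d+1)/n + xbar\<^sup>2/(n S2) + 1/((d+1) n S2)\<close>, and Markov's inequality for the squared distance
  gives the bound. For the rate, the bound is \<open>1/n\<close> times a factor of order
  \<open>n powr max \<gamma> \<mu>\<close> times the square of a factor of order \<open>n powr max 0 (\<mu> - \<gamma>)\<close>.\<close>

section \<open>Quadratic forms and the largest eigenvalue\<close>

definition quad_form :: "nat \<Rightarrow> (nat \<Rightarrow> nat \<Rightarrow> real) \<Rightarrow> (nat \<Rightarrow> real) \<Rightarrow> real" where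
  "quad_form N A v = (\<Sum>i<N. \<Sum>j<N. v i * A i j * v j)"

definition sq_norm :: "nat \<Rightarrow> (nat \<Rightarrow> real) \<Rightarrow> real" where
  "sq_norm N v = (\<Sum>i<N. (v i)^2)"

lemma finite_eigenvalues: "finite {lam. is_eigenvalue N A lam}"
proof -
  define B where "B = mat N N (\<lambda>(i,j). A i j)"
  have B: "B \<in> carrier_mat N N" by (simp add: B_def)
  have "{lam. is_eigenvalue N A lam} \<subseteq> {lam. poly (char_poly B) lam = 0}"
  proof
    fix lam assume "lam \<in> {lam. is_eigenvalue N A lam}"
    then obtain v where v: "\<exists>i<N. v i \<noteq> 0" "\<forall>i<N. (\<Sum>j<N. A i j * v j) = lam * v i"
      unfolding is_eigenvalue_def by auto
    have "eigenvector B (vec N v) lam"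
      unfolding eigenvector_def using v
      by (auto simp: B_def vec_eq_iff mult_mat_vec_def scalar_prod_def atLeast0LessThan)
    then show "lam \<in> {lam. poly (char_poly B) lam = 0}"
      using eigenvalue_root_char_poly[OF B] by (auto simp: eigenvalue_def)
  qed
  moreover have "char_poly B \<noteq> 0" using degree_monic_char_poly[OF B] by auto
  ultimately show ?thesis using poly_roots_finite finite_subset by blast
qed

lemma sq_norm_nonneg: "0 \<le> sq_norm N v"
  by (simp add: sq_norm_def sum_nonneg)

lemma sq_norm_eq_0_iff: "sq_norm N v = 0 \<longleftrightarrow> (\<forall>i<N. v i = 0)"
  by (auto simp: sq_norm_def sum_nonneg_eq_0_iff)

lemma square_le_sq_norm: "i < N \<Longrightarrow> (v i)^2 \<le> sq_norm N v"
  unfolding sq_norm_def by (rule member_le_sum) auto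

lemma quad_form_scale: "quad_form N A (\<lambda>i. c * v i) = c^2 * quad_form N A v"
  by (simp add: quad_form_def sum_distrib_left power2_eq_square algebra_simps)

lemma sq_norm_scale: "sq_norm N (\<lambda>i. c * v i) = c^2 * sq_norm N v"
  by (simp add: sq_norm_def sum_distrib_left power_mult_distrib)

lemma quad_form_add_scaled:
  assumes sym: "\<forall>i<N. \<forall>j<N. A i j = A j i"
  shows "quad_form N A (\<lambda>i. u i + t * r i)
     = quad_form N A u + 2 * t * (\<Sum>i<N. r i * (\<Sum>j<N. A i j * u j)) + t^2 * quad_form N A r"
proof -
  have swap: "(\<Sum>i<N. \<Sum>j<N. u i * A i j * r j) = (\<Sum>i<N. \<Sum>j<N. r i * A i j * u j)"
    by (subst sum.swap) (use sym in \<open>auto intro!: sum.cong simp: algebra_simps\<close>)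
  have inner: "(\<Sum>i<N. r i * (\<Sum>j<N. A i j * u j)) = (\<Sum>i<N. \<Sum>j<N. r i * A i j * u j)"
    by (simp add: sum_distrib_left mult.assoc)
  have "quad_form N A (\<lambda>i. u i + t * r i) = quad_form N A u
      + t * (\<Sum>i<N. \<Sum>j<N. r i * A i j * u j) + t * (\<Sum>i<N. \<Sum>j<N. u i * A i j * r j)
      + t^2 * quad_form N A r"
    by (simp add: quad_form_def sum.distrib sum_distrib_left power2_eq_square algebra_simps)
  then show ?thesis
    unfolding swap inner by (simp only: mult_2 distrib_right add.assoc)
qed

lemma sq_norm_add_scaled:
  "sq_norm N (\<lambda>i. u i + t * r i) = sq_norm N u + 2 * t * (\<Sum>i<N. r i * u i) + t^2 * sq_norm N r"
  by (simp add: sq_norm_def sum.distrib sum_distrib_left power2_eq_square algebra_simps)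

lemma nonpos_if_quadratic_nonpos:
  fixes a b :: real
  assumes "\<forall>t>0. t * a + t^2 * b \<le> 0"
  shows "a \<le> 0"
proof (rule ccontr)
  assume "\<not> a \<le> 0"
  define t where "t = a / (\<bar>b\<bar> + 1)"
  have "t > 0" using \<open>\<not> a \<le> 0\<close> by (simp add: t_def)
  have "t * \<bar>b\<bar> < a"
    using \<open>\<not> a \<le> 0\<close> by (simp add: t_def field_simps)
  moreover have "t * (- \<bar>b\<bar>) \<le> t * b"
    using \<open>t > 0\<close> by (intro mult_left_mono) auto
  ultimately have "0 < t * (a + t * b)"
    using \<open>t > 0\<close> by (intro mult_pos_pos) auto
  with assms \<open>t > 0\<close> show False by (auto simp: power2_eq_square algebra_simps)
qed

lemma quad_form_eq_0_if_sq_norm_eq_0: "sq_norm N v = 0 \<Longrightarrow> quad_form N A v = 0"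
  by (simp add: quad_form_def sq_norm_eq_0_iff)

lemma quad_form_cong: "(\<And>i. i < N \<Longrightarrow> v i = w i) \<Longrightarrow> quad_form N A v = quad_form N A w"
  by (simp add: quad_form_def)

lemma sq_norm_cong: "(\<And>i. i < N \<Longrightarrow> v i = w i) \<Longrightarrow> sq_norm N v = sq_norm N w"
  by (simp add: sq_norm_def)

lemma sq_norm_unit:
  assumes "i < N"
  shows "sq_norm N (\<lambda>j. if j = i then 1 else 0) = 1"
proof -
  have "sq_norm N (\<lambda>j. if j = i then 1 else 0) = (\<Sum>j<N. if j = i then 1 else 0)"
    unfolding sq_norm_def by (intro sum.cong) auto
  with assms show ?thesis by simp
qed

lemma quad_form_le_if_le_on_sphere:
  assumes "\<And>w. sq_norm N w = 1 \<Longrightarrow> quad_form N A w \<le> lam"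
  shows "quad_form N A v \<le> lam * sq_norm N v"
proof (cases "sq_norm N v = 0")
  case True
  then show ?thesis by (simp add: quad_form_eq_0_if_sq_norm_eq_0)
next
  case False
  define c where "c = 1 / sqrt (sq_norm N v)"
  have c2: "c^2 * sq_norm N v = 1"
    using False sq_norm_nonneg[of N v] by (simp add: c_def power_divide)
  then have "c^2 * quad_form N A v \<le> lam"
    using assms[of "\<lambda>i. c * v i"] by (simp add: sq_norm_scale quad_form_scale)
  then have "(c^2 * quad_form N A v) * sq_norm N v \<le> lam * sq_norm N v"
    by (rule mult_right_mono) (rule sq_norm_nonneg)
  moreover have "(c^2 * quad_form N A v) * sq_norm N v = quad_form N A v"
    using c2 by (simp add: algebra_simps)
  ultimately show ?thesis by simp
qed

lemma quad_form_attains_max_on_sphere: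
  assumes "0 < N"
  shows "\<exists>u. sq_norm N u = 1 \<and> (\<forall>w. sq_norm N w = 1 \<longrightarrow> quad_form N A w \<le> quad_form N A u)"
proof -
  \<comment> \<open>the unit sphere is cut out of a box so that it is compact in the product topology\<close>
  define box where "box = Pi UNIV (\<lambda>i. if i < N then {-1..1::real} else {0})"
  define S where "S = box \<inter> {v. sq_norm N v = 1}"
  have "compactin (product_topology (\<lambda>i. euclidean) UNIV)
          (PiE UNIV (\<lambda>i. if i < N then {-1..1::real} else {0}))"
    by (subst compactin_PiE) auto
  then have "compact box"
    by (simp add: box_def euclidean_product_topology PiE_UNIV_domain)
  moreover have "closed {v. sq_norm N v = 1}"
    unfolding sq_norm_def
    by (intro closed_Collect_eq continuous_intros continuous_on_product_coordinates)
  ultimately have "compact S" by (simp add: S_def compact_Int_closed)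
  have "(\<lambda>j. if j = 0 then 1 else 0) \<in> S"
    using assms sq_norm_unit[of 0 N] by (auto simp: S_def box_def)
  then have "S \<noteq> {}" by auto
  moreover have "continuous_on UNIV (quad_form N A)"
    unfolding quad_form_def
    by (intro continuous_intros continuous_on_product_coordinates)
  ultimately obtain u where u: "u \<in> S" and max: "\<And>w. w \<in> S \<Longrightarrow> quad_form N A w \<le> quad_form N A u"
    using continuous_attains_sup[OF \<open>compact S\<close>, of "quad_form N A"]
      continuous_on_subset[of UNIV "quad_form N A" S] by auto
  have "quad_form N A w \<le> quad_form N A u" if "sq_norm N w = 1" for w
  proof -
    define w' where "w' i = (if i < N then w i else 0)" for i
    have "sq_norm N w' = 1" "quad_form N A w' = quad_form N A w"
      using that by (simp_all add: w'_def cong: sq_norm_cong quad_form_cong)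
    moreover have "\<bar>w' i\<bar> \<le> 1" for i
      using square_le_sq_norm[of i N w'] \<open>sq_norm N w' = 1\<close> by (auto simp: w'_def abs_square_le_1)
    ultimately have "w' \<in> S" by (auto simp: S_def box_def abs_le_iff) (simp add: w'_def)
    then show ?thesis using max[of w'] \<open>quad_form N A w' = quad_form N A w\<close> by simp
  qed
  with u show ?thesis by (auto simp: S_def)
qed

lemma quad_form_maximiser_is_eigenvector:
  assumes sym: "\<forall>i<N. \<forall>j<N. A i j = A j i"
    and u: "sq_norm N u = 1"
    and max: "\<forall>v. quad_form N A v \<le> quad_form N A u * sq_norm N v"
  shows "\<forall>i<N. (\<Sum>j<N. A i j * u j) = quad_form N A u * u i"
proof -
  define lam where "lam = quad_form N A u"
  define r where "r i = (\<Sum>j<N. A i j * u j) - lam * u i" for i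
  \<comment> \<open>first variation: along \<open>u + t r\<close> the maximality of \<open>u\<close> reads \<open>2 t |r|\<^sup>2 + O(t\<^sup>2) \<le> 0\<close>\<close>
  have "(\<Sum>i<N. r i * (\<Sum>j<N. A i j * u j)) - lam * (\<Sum>i<N. r i * u i)
      = (\<Sum>i<N. r i * ((\<Sum>j<N. A i j * u j) - lam * u i))"
    by (simp add: sum_subtractf sum_distrib_left right_diff_distrib mult.left_commute)
  also have "\<dots> = sq_norm N r"
    by (simp add: sq_norm_def r_def power2_eq_square)
  moreover have "quad_form N A (\<lambda>i. u i + t * r i) \<le> lam * sq_norm N (\<lambda>i. u i + t * r i)" for t
    using max by (simp add: lam_def)
  ultimately have "t * (2 * sq_norm N r) + t^2 * (quad_form N A r - lam * sq_norm N r) \<le> 0" for t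
    unfolding quad_form_add_scaled[OF sym] sq_norm_add_scaled u lam_def[symmetric]
    by (simp add: algebra_simps)
  then have "2 * sq_norm N r \<le> 0"
    by (intro nonpos_if_quadratic_nonpos) auto
  then have "sq_norm N r = 0"
    using sq_norm_nonneg[of N r] by linarith
  then show ?thesis by (simp add: sq_norm_eq_0_iff r_def lam_def)
qed

lemma quad_form_le_nu_max:
  assumes "0 < N" and sym: "\<forall>i<N. \<forall>j<N. A i j = A j i"
  shows "quad_form N A v \<le> nu_max N A * sq_norm N v"
proof -
  obtain u where u: "sq_norm N u = 1"
    and "\<forall>w. sq_norm N w = 1 \<longrightarrow> quad_form N A w \<le> quad_form N A u"
    using quad_form_attains_max_on_sphere[OF \<open>0 < N\<close>] by blast
  then have max: "\<forall>v. quad_form N A v \<le> quad_form N A u * sq_norm N v"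
    by (blast intro: quad_form_le_if_le_on_sphere)
  have "\<exists>i<N. u i \<noteq> 0" using u sq_norm_eq_0_iff[of N u] by auto
  then have "is_eigenvalue N A (quad_form N A u)"
    using quad_form_maximiser_is_eigenvector[OF sym u max] by (auto simp: is_eigenvalue_def)
  then have "quad_form N A u \<le> nu_max N A"
    unfolding nu_max_def using finite_eigenvalues by (intro Max_ge) auto
  then show ?thesis
    using max[rule_format, of v] sq_norm_nonneg[of N v] by (meson mult_right_mono order.trans)
qed

lemma diag_le_nu_max:
  assumes "i < N" and sym: "\<forall>i<N. \<forall>j<N. A i j = A j i"
  shows "A i i \<le> nu_max N A"
proof -
  have "quad_form N A (\<lambda>j. if j = i then 1 else 0) = (\<Sum>i'<N. if i' = i then A i i else 0)"
    unfolding quad_form_def using \<open>i < N\<close> by (intro sum.cong) (auto simp: if_distrib cong: if_cong)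
  then have "quad_form N A (\<lambda>j. if j = i then 1 else 0) = A i i"
    using \<open>i < N\<close> by simp
  then show ?thesis
    using quad_form_le_nu_max[OF _ sym, of "\<lambda>j. if j = i then 1 else 0"] sq_norm_unit \<open>i < N\<close>
    by simp
qed

section \<open>Second moments of weighted sums of the errors\<close>

lemma sum_mod_div_reindex:
  fixes m n :: nat
  shows "(\<Sum>p<m*n. g (p mod m) (p div m)) = (\<Sum>k<m. \<Sum>j<n. g k j)"
proof -
  have enc: "j * m + k < m * n" if "k < m" "j < n" for k j
  proof -
    have "j * m + k < Suc j * m" using that by simp
    also have "\<dots> \<le> n * m" using that by (intro mult_le_mono1) simp
    finally show ?thesis by (simp add: mult.commute)
  qed
  have dec: "p mod m < m" if "p < m * n" for p
    using that by (cases m) auto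
  have "(\<Sum>p<m*n. g (p mod m) (p div m)) = (\<Sum>(k,j)\<in>{..<m} \<times> {..<n}. g k j)"
    by (rule sum.reindex_bij_witness[where i="\<lambda>(k,j). j * m + k" and j="\<lambda>p. (p mod m, p div m)"])
       (auto simp: less_mult_imp_div_less mult.commute enc dec)
  then show ?thesis by (simp add: sum.cartesian_product)
qed

lemma sum_flat_index:
  fixes d n :: nat
  shows "(\<Sum>k\<le>d. \<Sum>j=1..n. f k j) = (\<Sum>p<(d+1)*n. f (p mod (d+1)) (p div (d+1) + 1))"
proof -
  have "(\<Sum>p<(d+1)*n. f (p mod (d+1)) (p div (d+1) + 1)) = (\<Sum>k<d+1. \<Sum>j<n. f k (Suc j))"
    using sum_mod_div_reindex[of "\<lambda>k j. f k (Suc j)" "d+1" n] by simp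
  also have "\<dots> = (\<Sum>k\<le>d. \<Sum>j=1..n. f k j)"
    by (simp add: lessThan_Suc_atMost sum.atLeast1_atMost_eq)
  finally show ?thesis ..
qed

lemma integrable_mult_if_square_integrable:
  fixes f g :: "'a \<Rightarrow> real"
  assumes "f \<in> borel_measurable M" "g \<in> borel_measurable M"
    and "integrable M (\<lambda>\<omega>. (f \<omega>)^2)" "integrable M (\<lambda>\<omega>. (g \<omega>)^2)"
  shows "integrable M (\<lambda>\<omega>. f \<omega> * g \<omega>)"
proof (rule Bochner_Integration.integrable_bound)
  show "integrable M (\<lambda>\<omega>. (f \<omega>)^2 + (g \<omega>)^2)" using assms by auto
  show "(\<lambda>\<omega>. f \<omega> * g \<omega>) \<in> borel_measurable M" using assms by auto
  have "\<bar>f \<omega> * g \<omega>\<bar> \<le> (f \<omega>)^2 + (g \<omega>)^2" for \<omega>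
  proof -
    have "2 * (\<bar>f \<omega>\<bar> * \<bar>g \<omega>\<bar>) \<le> (f \<omega>)^2 + (g \<omega>)^2"
      using sum_squares_bound[of "\<bar>f \<omega>\<bar>" "\<bar>g \<omega>\<bar>"] by (simp add: mult.assoc)
    moreover have "0 \<le> \<bar>f \<omega>\<bar> * \<bar>g \<omega>\<bar>" by simp
    ultimately show ?thesis unfolding abs_mult by linarith
  qed
  then show "AE \<omega> in M. norm (f \<omega> * g \<omega>) \<le> norm ((f \<omega>)^2 + (g \<omega>)^2)"
    by simp
qed

lemma second_moment_weighted_sum:
  fixes e :: "nat \<Rightarrow> 'a \<Rightarrow> real"
  assumes meas: "\<And>p. p < N \<Longrightarrow> e p \<in> borel_measurable M"
    and sq: "\<And>p. p < N \<Longrightarrow> integrable M (\<lambda>\<omega>. (e p \<omega>)^2)"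
    and mean: "\<And>p. p < N \<Longrightarrow> (\<integral>\<omega>. e p \<omega> \<partial>M) = 0"
  shows "integrable M (\<lambda>\<omega>. (\<Sum>p<N. a p * e p \<omega>)^2)"
    and "(\<integral>\<omega>. (\<Sum>p<N. a p * e p \<omega>)^2 \<partial>M) = quad_form N (\<lambda>p q. covar M (e p) (e q)) a"
proof -
  have prod: "integrable M (\<lambda>\<omega>. e p \<omega> * e q \<omega>)" if "p < N" "q < N" for p q
    using that by (intro integrable_mult_if_square_integrable meas sq)
  have square: "(\<Sum>p<N. a p * e p \<omega>)^2 = (\<Sum>p<N. \<Sum>q<N. a p * a q * (e p \<omega> * e q \<omega>))" for \<omega>
    by (simp add: power2_eq_square sum_product algebra_simps)
  show "integrable M (\<lambda>\<omega>. (\<Sum>p<N. a p * e p \<omega>)^2)"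
    unfolding square by (intro Bochner_Integration.integrable_sum integrable_mult_right) (auto intro: prod)
  have "(\<integral>\<omega>. (\<Sum>p<N. a p * e p \<omega>)^2 \<partial>M)
      = (\<Sum>p<N. \<integral>\<omega>. (\<Sum>q<N. a p * a q * (e p \<omega> * e q \<omega>)) \<partial>M)"
    unfolding square
    by (rule Bochner_Integration.integral_sum)
       (auto intro!: Bochner_Integration.integrable_sum integrable_mult_right prod)
  also have "\<dots> = (\<Sum>p<N. \<Sum>q<N. a p * a q * (\<integral>\<omega>. e p \<omega> * e q \<omega> \<partial>M))"
    by (intro sum.cong refl, subst Bochner_Integration.integral_sum) (auto intro: prod)
  also have "\<dots> = quad_form N (\<lambda>p q. covar M (e p) (e q)) a"
    unfolding quad_form_def covar_def using mean by (intro sum.cong) (simp_all add: mult_ac)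
  finally show "(\<integral>\<omega>. (\<Sum>p<N. a p * e p \<omega>)^2 \<partial>M) = quad_form N (\<lambda>p q. covar M (e p) (e q)) a" .
qed

lemma cov_matrix_sym: "cov_matrix M d \<delta> p q = cov_matrix M d \<delta> q p"
  by (simp add: cov_matrix_def covar_def mult.commute)

lemma second_moment_weighted_errors:
  fixes \<delta> :: "nat \<Rightarrow> nat \<Rightarrow> 'a \<Rightarrow> real" and a :: "nat \<Rightarrow> nat \<Rightarrow> real"
  assumes rv: "\<forall>k\<le>d. \<forall>j\<ge>1. \<delta> k j \<in> borel_measurable M"
    and sq_int: "\<forall>k\<le>d. \<forall>j\<ge>1. integrable M (\<lambda>\<omega>. (\<delta> k j \<omega>)^2)"
    and mean0: "\<forall>k\<le>d. \<forall>j\<ge>1. integrable M (\<delta> k j) \<and> (\<integral>\<omega>. \<delta> k j \<omega> \<partial>M) = 0"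
    and "n > 0"
  shows "integrable M (\<lambda>\<omega>. (\<Sum>k\<le>d. \<Sum>j=1..n. a k j * \<delta> k j \<omega>)^2)"
    and "(\<integral>\<omega>. (\<Sum>k\<le>d. \<Sum>j=1..n. a k j * \<delta> k j \<omega>)^2 \<partial>M)
           \<le> nu_max ((d+1)*n) (cov_matrix M d \<delta>) * (\<Sum>k\<le>d. \<Sum>j=1..n. (a k j)^2)"
proof -
  define N where "N = (d+1)*n"
  define k where "k p = p mod (d+1)" for p
  define j where "j p = p div (d+1) + 1" for p
  have "k p \<le> d" for p by (simp add: k_def less_Suc_eq_le)
  then have e: "\<delta> (k p) (j p) \<in> borel_measurable M" "integrable M (\<lambda>\<omega>. (\<delta> (k p) (j p) \<omega>)^2)"
      "(\<integral>\<omega>. \<delta> (k p) (j p) \<omega> \<partial>M) = 0" for p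
    using rv sq_int mean0 by (simp_all add: j_def)
  have sums: "(\<Sum>k\<le>d. \<Sum>j=1..n. a k j * \<delta> k j \<omega>) = (\<Sum>p<N. a (k p) (j p) * \<delta> (k p) (j p) \<omega>)" for \<omega>
    unfolding N_def k_def j_def by (rule sum_flat_index)
  show "integrable M (\<lambda>\<omega>. (\<Sum>k\<le>d. \<Sum>j=1..n. a k j * \<delta> k j \<omega>)^2)"
    unfolding sums by (rule second_moment_weighted_sum) (use e in auto)
  have "(\<integral>\<omega>. (\<Sum>k\<le>d. \<Sum>j=1..n. a k j * \<delta> k j \<omega>)^2 \<partial>M)
      = quad_form N (cov_matrix M d \<delta>) (\<lambda>p. a (k p) (j p))"
    unfolding sums second_moment_weighted_sum(2)[OF e]
    by (simp add: quad_form_def cov_matrix_def k_def j_def)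
  also have "\<dots> \<le> nu_max N (cov_matrix M d \<delta>) * sq_norm N (\<lambda>p. a (k p) (j p))"
    using \<open>n > 0\<close> by (intro quad_form_le_nu_max) (auto simp: N_def cov_matrix_sym)
  also have "sq_norm N (\<lambda>p. a (k p) (j p)) = (\<Sum>k\<le>d. \<Sum>j=1..n. (a k j)^2)"
    unfolding sq_norm_def N_def k_def j_def by (rule sum_flat_index[symmetric])
  finally show "(\<integral>\<omega>. (\<Sum>k\<le>d. \<Sum>j=1..n. a k j * \<delta> k j \<omega>)^2 \<partial>M)
           \<le> nu_max ((d+1)*n) (cov_matrix M d \<delta>) * (\<Sum>k\<le>d. \<Sum>j=1..n. (a k j)^2)"
    by (simp add: N_def)
qed

section \<open>The least squares estimator in closed form\<close>

(* Keeps {1..n} from being rewritten to {Suc 0..n}, so that the sum lemmas below stay applicable. *)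
declare One_nat_def [simp del]

lemma sum_eq_n_xbar: "n > 0 \<Longrightarrow> (\<Sum>j=1..n. x j) = real n * xbar x n"
  by (simp add: xbar_def)

lemma sum_centred_eq_0: "n > 0 \<Longrightarrow> (\<Sum>j=1..n. x j - xbar x n) = 0"
  by (simp add: sum_subtractf sum_eq_n_xbar)

lemma sum_centred_square_eq: "n > 0 \<Longrightarrow> (\<Sum>j=1..n. (x j - xbar x n)^2) = real n * S2 x n"
  by (simp add: S2_def)

lemma S2_nonneg: "S2 x n \<ge> 0"
  unfolding S2_def by (intro mult_nonneg_nonneg sum_nonneg) auto

lemma S2_pos:
  assumes "n \<ge> 2" and "x 1 \<noteq> x 2"
  shows "S2 x n > 0"
proof (rule ccontr)
  assume "\<not> S2 x n > 0"
  then have "(\<Sum>j=1..n. (x j - xbar x n)^2) = 0"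
    using S2_nonneg[of x n] \<open>n \<ge> 2\<close> by (simp add: sum_centred_square_eq)
  then have "\<forall>j\<in>{1..n}. (x j - xbar x n)^2 = 0"
    by (subst sum_nonneg_eq_0_iff[symmetric]) auto
  then show False using assms by force
qed

definition slope_weight :: "nat \<Rightarrow> (nat \<Rightarrow> real) \<Rightarrow> nat \<Rightarrow> nat \<Rightarrow> real" where
  "slope_weight d x n j = (x j - xbar x n) / (real (d+1) * real n * S2 x n)"

definition lse_weight :: "nat \<Rightarrow> (nat \<Rightarrow> real) \<Rightarrow> nat \<Rightarrow> nat \<Rightarrow> nat \<Rightarrow> nat \<Rightarrow> real" where
  "lse_weight d x n i k j =
     (if i = d+1 then slope_weight d x n j
      else (if k = i then 1 / real n else 0) - xbar x n * slope_weight d x n j)"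

definition ls_fit :: "nat \<Rightarrow> (nat \<Rightarrow> real) \<Rightarrow> nat \<Rightarrow> (nat \<Rightarrow> nat \<Rightarrow> real) \<Rightarrow> nat \<Rightarrow> real" where
  "ls_fit d x n y i =
     (if i \<le> d+1 then \<Sum>k\<le>d. \<Sum>j=1..n. lse_weight d x n i k j * y k j else 0)"

lemma sum_slope_weight: "n > 0 \<Longrightarrow> (\<Sum>j=1..n. slope_weight d x n j) = 0"
  by (simp add: slope_weight_def sum_centred_eq_0 flip: sum_divide_distrib)

lemma sum_slope_weight_mult:
  assumes "n > 0" and "S2 x n > 0"
  shows "(\<Sum>j=1..n. slope_weight d x n j * x j) = 1 / real (d+1)"
proof -
  have "(\<Sum>j=1..n. slope_weight d x n j * x j) = (\<Sum>j=1..n. slope_weight d x n j * (x j - xbar x n))"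
    using sum_slope_weight[OF \<open>n > 0\<close>, of d x]
    by (simp add: right_diff_distrib sum_subtractf flip: sum_distrib_right)
  also have "\<dots> = (\<Sum>j=1..n. (x j - xbar x n)^2) / (real (d+1) * real n * S2 x n)"
    by (simp add: slope_weight_def power2_eq_square sum_divide_distrib)
  finally show ?thesis using assms by (simp add: sum_centred_square_eq)
qed

lemma sum_slope_weight_square:
  assumes "n > 0" and "S2 x n > 0"
  shows "(\<Sum>j=1..n. (slope_weight d x n j)^2) = 1 / ((real (d+1))^2 * real n * S2 x n)"
proof -
  have "(\<Sum>j=1..n. (slope_weight d x n j)^2)
      = (\<Sum>j=1..n. (x j - xbar x n)^2) / (real (d+1) * real n * S2 x n)^2"
    by (simp add: slope_weight_def power_divide flip: sum_divide_distrib)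
  also have "\<dots> = 1 / ((real (d+1))^2 * real n * S2 x n)"
    using assms by (simp only: sum_centred_square_eq) (simp add: power2_eq_square)
  finally show ?thesis .
qed

lemma ls_fit_slope:
  "ls_fit d x n y (d+1) = (\<Sum>k\<le>d. \<Sum>j=1..n. slope_weight d x n j * y k j)"
  by (simp add: ls_fit_def lse_weight_def)

lemma ls_fit_intercept:
  assumes "i \<le> d"
  shows "ls_fit d x n y i = (\<Sum>j=1..n. y i j) / real n - xbar x n * ls_fit d x n y (d+1)"
proof -
  have "ls_fit d x n y i = (\<Sum>k\<le>d. \<Sum>j=1..n. (if k = i then y k j / real n else 0))
      - xbar x n * (\<Sum>k\<le>d. \<Sum>j=1..n. slope_weight d x n j * y k j)"
    using assms
    by (simp add: ls_fit_def lse_weight_def left_diff_distrib sum_subtractf sum_distrib_left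
        mult.assoc if_distrib[of "\<lambda>c. c * _"] cong: if_cong)
  also have "(\<Sum>k\<le>d. \<Sum>j=1..n. (if k = i then y k j / real n else 0))
      = (\<Sum>k\<le>d. if k = i then (\<Sum>j=1..n. y i j) / real n else 0)"
    by (intro sum.cong) (auto simp: sum_divide_distrib)
  also have "\<dots> = (\<Sum>j=1..n. y i j) / real n"
    using assms by simp
  finally show ?thesis by (simp add: ls_fit_slope)
qed

lemma ls_fit_add:
  "ls_fit d x n (\<lambda>k j. y k j + z k j) i = ls_fit d x n y i + ls_fit d x n z i"
  by (simp add: ls_fit_def distrib_left sum.distrib)

lemma ls_fit_exact:
  assumes "n > 0" and "S2 x n > 0"
  shows "ls_fit d x n (\<lambda>k j. \<beta> k + s * x j) i = (if i \<le> d then \<beta> i else if i = d+1 then s else 0)"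
proof -
  have slope: "ls_fit d x n (\<lambda>k j. \<beta> k + s * x j) (d+1) = s"
  proof -
    have "ls_fit d x n (\<lambda>k j. \<beta> k + s * x j) (d+1)
        = (\<Sum>k\<le>d. \<beta> k * (\<Sum>j=1..n. slope_weight d x n j) + s * (\<Sum>j=1..n. slope_weight d x n j * x j))"
      by (simp add: ls_fit_slope distrib_left sum.distrib sum_distrib_left mult_ac)
    also have "\<dots> = s"
      using assms by (simp add: sum_slope_weight sum_slope_weight_mult add.commute)
    finally show ?thesis .
  qed
  have "ls_fit d x n (\<lambda>k j. \<beta> k + s * x j) i = \<beta> i" if "i \<le> d"
    using that assms
    by (simp add: ls_fit_intercept slope sum.distrib sum_eq_n_xbar flip: sum_distrib_left)
       (simp add: field_simps)
  then show ?thesis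
    using slope by (auto simp: ls_fit_def)
qed

lemma ls_fit_residual_sum:
  assumes "n > 0" and "k \<le> d"
  shows "(\<Sum>j=1..n. y k j - ls_fit d x n y k - ls_fit d x n y (d+1) * x j) = 0"
  using assms
  by (simp add: sum_subtractf ls_fit_intercept sum_eq_n_xbar flip: sum_distrib_left)
     (simp add: algebra_simps)

lemma ls_fit_residual_orthogonal:
  assumes "n > 0" and "S2 x n > 0"
  shows "(\<Sum>k\<le>d. \<Sum>j=1..n. (y k j - ls_fit d x n y k - ls_fit d x n y (d+1) * x j) * x j) = 0"
proof -
  define b where "b = ls_fit d x n y"
  define r where "r k j = y k j - b k - b (d+1) * x j" for k j
  define w where "w = slope_weight d x n"
  define c where "c = real (d+1) * real n * S2 x n"
  \<comment> \<open>\<open>x\<close> is a constant plus a multiple of the slope weights, and the residuals are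
    orthogonal to both\<close>
  have x: "x j = xbar x n + c * w j" for j
    using assms by (simp add: c_def w_def slope_weight_def)
  have "(\<Sum>k\<le>d. \<Sum>j=1..n. r k j * w j)
      = (\<Sum>k\<le>d. \<Sum>j=1..n. w j * y k j) - (\<Sum>k\<le>d. b k * (\<Sum>j=1..n. w j))
        - b (d+1) * (\<Sum>k\<le>d. \<Sum>j=1..n. w j * x j)"
  proof -
    have "r k j * w j = w j * y k j - b k * w j - b (d+1) * (w j * x j)" for k j
      by (simp add: r_def algebra_simps)
    then show ?thesis by (simp add: sum_subtractf sum_distrib_left mult_ac)
  qed
  also have "\<dots> = 0"
    using assms
    by (simp add: b_def w_def ls_fit_slope sum_slope_weight sum_slope_weight_mult)
       (simp add: field_simps)
  finally have "(\<Sum>k\<le>d. \<Sum>j=1..n. r k j * w j) = 0" .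
  moreover have "(\<Sum>j=1..n. r k j) = 0" if "k \<le> d" for k
    using ls_fit_residual_sum[OF \<open>n > 0\<close> that] by (simp add: r_def b_def)
  moreover have "(\<Sum>k\<le>d. \<Sum>j=1..n. r k j * x j)
      = (\<Sum>k\<le>d. xbar x n * (\<Sum>j=1..n. r k j)) + c * (\<Sum>k\<le>d. \<Sum>j=1..n. r k j * w j)"
    by (simp add: x distrib_left sum.distrib sum_distrib_left mult_ac)
  ultimately have "(\<Sum>k\<le>d. \<Sum>j=1..n. r k j * x j) = 0"
    by simp
  then show ?thesis by (simp add: r_def b_def)
qed

lemma RSS_ls_fit_decomposition:
  assumes "n > 0" and "S2 x n > 0"
  shows "RSS d x y n v = RSS d x y n (ls_fit d x n y)
           + (\<Sum>k\<le>d. \<Sum>j=1..n. (ls_fit d x n y k - v k + (ls_fit d x n y (d+1) - v (d+1)) * x j)^2)"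
proof -
  define b where "b = ls_fit d x n y"
  define r where "r k j = y k j - b k - b (d+1) * x j" for k j
  define a where "a k = b k - v k" for k
  define c where "c = b (d+1) - v (d+1)"
  have square: "(y k j - v k - v (d+1) * x j)^2
      = (r k j)^2 + 2 * (a k * r k j + c * (r k j * x j)) + (a k + c * x j)^2" for k j
    by (simp add: r_def a_def c_def power2_eq_square algebra_simps)
  have "(\<Sum>k\<le>d. \<Sum>j=1..n. a k * r k j + c * (r k j * x j))
      = (\<Sum>k\<le>d. a k * (\<Sum>j=1..n. r k j)) + c * (\<Sum>k\<le>d. \<Sum>j=1..n. r k j * x j)"
    by (simp add: sum.distrib sum_distrib_left)
  also have "\<dots> = 0"
    using ls_fit_residual_sum[OF \<open>n > 0\<close>] ls_fit_residual_orthogonal[OF assms(1,2)]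
    by (simp add: r_def b_def)
  finally have cross: "(\<Sum>k\<le>d. \<Sum>j=1..n. a k * r k j + c * (r k j * x j)) = 0" .
  have "RSS d x y n v = (\<Sum>k\<le>d. \<Sum>j=1..n. (r k j)^2)
      + 2 * (\<Sum>k\<le>d. \<Sum>j=1..n. a k * r k j + c * (r k j * x j))
      + (\<Sum>k\<le>d. \<Sum>j=1..n. (a k + c * x j)^2)"
    by (simp add: RSS_def atLeast0AtMost square sum.distrib sum_distrib_left)
  also have "(\<Sum>k\<le>d. \<Sum>j=1..n. (r k j)^2) = RSS d x y n b"
    by (simp add: RSS_def atLeast0AtMost r_def)
  finally show ?thesis using cross by (simp add: a_def c_def b_def)
qed

lemma affine_sum_squares_eq_0:
  fixes a x :: "nat \<Rightarrow> real" and c :: real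
  assumes "(\<Sum>k\<le>d. \<Sum>j=1..n. (a k + c * x j)^2) = 0" and "n \<ge> 2" and "x 1 \<noteq> x 2"
  shows "c = 0" and "\<And>k. k \<le> d \<Longrightarrow> a k = 0"
proof -
  have "\<forall>k\<in>{..d}. (\<Sum>j=1..n. (a k + c * x j)^2) = 0"
    using assms(1) sum_nonneg_eq_0_iff[of "{..d}" "\<lambda>k. \<Sum>j=1..n. (a k + c * x j)^2"]
    by (simp add: sum_nonneg)
  then have zero: "a k + c * x j = 0" if "k \<le> d" "j \<in> {1..n}" for k j
    using that by (simp add: sum_nonneg_eq_0_iff)
  have "a 0 + c * x 1 = 0" "a 0 + c * x 2 = 0"
    using zero \<open>n \<ge> 2\<close> by auto
  then have "c * x 1 = c * x 2"
    by linarith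
  then show "c = 0" using \<open>x 1 \<noteq> x 2\<close> by simp
  then show "a k = 0" if "k \<le> d" for k
    using zero[of k 1] that \<open>n \<ge> 2\<close> by simp
qed

lemma lse_eq_ls_fit:
  assumes "n \<ge> 2" and "x 1 \<noteq> x 2"
  shows "lse d x y n = ls_fit d x n y"
proof -
  have "n > 0" "S2 x n > 0" using assms S2_pos by auto
  note decomp = RSS_ls_fit_decomposition[OF this, of d y]
  have nonneg: "0 \<le> (\<Sum>k\<le>d. \<Sum>j=1..n. (ls_fit d x n y k - v k + (ls_fit d x n y (d+1) - v (d+1)) * x j)^2)"
    for v by (intro sum_nonneg) auto
  show ?thesis
    unfolding lse_def
  proof (rule the_equality)
    have "RSS d x y n (ls_fit d x n y) \<le> RSS d x y n v" for v
      using decomp[of v] nonneg[of v] by linarith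
    moreover have "\<forall>i>d+1. ls_fit d x n y i = 0"
      by (simp add: ls_fit_def)
    ultimately show "(\<forall>i>d+1. ls_fit d x n y i = 0) \<and> (\<forall>v. RSS d x y n (ls_fit d x n y) \<le> RSS d x y n v)"
      by blast
  next
    fix v assume v: "(\<forall>i>d+1. v i = 0) \<and> (\<forall>w. RSS d x y n v \<le> RSS d x y n w)"
    then have "RSS d x y n v \<le> RSS d x y n (ls_fit d x n y)"
      by blast
    then have "(\<Sum>k\<le>d. \<Sum>j=1..n. (ls_fit d x n y k - v k + (ls_fit d x n y (d+1) - v (d+1)) * x j)^2) = 0"
      using decomp[of v] nonneg[of v] by linarith
    note zero = affine_sum_squares_eq_0[OF this assms]
    show "v = ls_fit d x n y"
    proof
      fix i
      consider "i \<le> d" | "i = d+1" | "i > d+1" by linarith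
      then show "v i = ls_fit d x n y i"
      proof cases
        case 3
        then show ?thesis using v by (simp add: ls_fit_def)
      qed (use zero in auto)
    qed
  qed
qed

lemma lse_error_eq_ls_fit:
  assumes "n \<ge> 2" and "x 1 \<noteq> x 2"
  shows "lse d x (\<lambda>k j. \<beta> k + s * x j + \<delta> k j) n i
           - (if i \<le> d then \<beta> i else if i = d+1 then s else 0) = ls_fit d x n \<delta> i"
proof -
  have "n > 0" "S2 x n > 0" using assms S2_pos by auto
  then show ?thesis
    using ls_fit_add[of d x n "\<lambda>k j. \<beta> k + s * x j" \<delta> i] ls_fit_exact[of n x d \<beta> s i]
    by (simp add: lse_eq_ls_fit[OF assms])
qed

lemma sum_square_slope_lse_weight:
  assumes "n > 0" and "S2 x n > 0"
  shows "(\<Sum>k\<le>d. \<Sum>j=1..n. (lse_weight d x n (d+1) k j)^2) = 1 / (real (d+1) * real n * S2 x n)"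
  using assms by (simp add: lse_weight_def sum_slope_weight_square) (simp add: power2_eq_square add.commute[of 1 "real d"])

lemma sum_square_intercept_lse_weight:
  assumes "n > 0" and "S2 x n > 0" and "i \<le> d"
  shows "(\<Sum>k\<le>d. \<Sum>j=1..n. (lse_weight d x n i k j)^2)
           = 1 / real n + (xbar x n)^2 / (real (d+1) * real n * S2 x n)"
proof -
  define w where "w = slope_weight d x n"
  have "(lse_weight d x n i k j)^2
      = (if k = i then 1 / (real n)^2 - 2 * xbar x n / real n * w j else 0) + (xbar x n)^2 * (w j)^2"
    for k j using assms by (simp add: lse_weight_def w_def power2_eq_square algebra_simps)
  moreover have "(\<Sum>k\<le>d. \<Sum>j=1..n. if k = i then 1 / (real n)^2 - 2 * xbar x n / real n * w j else 0)
      = (\<Sum>k\<le>d. if k = i then (\<Sum>j=1..n. 1 / (real n)^2 - 2 * xbar x n / real n * w j) else 0)"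
    by (intro sum.cong) auto
  moreover have "(\<Sum>j=1..n. 1 / (real n)^2 - 2 * xbar x n / real n * w j)
      = real n / (real n)^2 - 2 * xbar x n / real n * (\<Sum>j=1..n. w j)"
    by (simp add: sum_subtractf sum_distrib_left)
  moreover have "real n / (real n)^2 - 2 * xbar x n / real n * (\<Sum>j=1..n. w j) = 1 / real n"
    using assms by (simp add: w_def sum_slope_weight power2_eq_square)
  moreover have "(\<Sum>k\<le>d. \<Sum>j=1..n. (xbar x n)^2 * (w j)^2)
      = (xbar x n)^2 / (real (d+1) * real n * S2 x n)"
    using assms by (simp add: w_def sum_slope_weight_square flip: sum_distrib_left)
      (simp add: power2_eq_square add.commute[of 1 "real d"])
  ultimately show ?thesis
    using assms by (simp add: sum.distrib)
qed

lemma sum_square_lse_weights: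
  assumes "n > 0" and "S2 x n > 0"
  shows "(\<Sum>i\<le>d+1. \<Sum>k\<le>d. \<Sum>j=1..n. (lse_weight d x n i k j)^2)
           = real (d+1) / real n + (xbar x n)^2 / (real n * S2 x n)
             + 1 / (real (d+1) * real n * S2 x n)"
proof -
  have "D * (1 / real n + (xbar x n)^2 / (D * real n * S2 x n)) = D / real n + (xbar x n)^2 / (real n * S2 x n)"
    if "D > 0" for D :: real
    using assms that by (simp add: field_simps)
  from this[of "real d + 1"] show ?thesis
    using assms
    by (simp add: sum.atMost_Suc[of _ d, unfolded Suc_eq_plus1] sum_square_intercept_lse_weight
        sum_square_slope_lse_weight add.commute[of 1 "real d"])
qed

section \<open>Deviation bound\<close>

lemma second_moment_ls_fit_errors:
  fixes \<delta> :: "nat \<Rightarrow> nat \<Rightarrow> 'a \<Rightarrow> real"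
  assumes rv: "\<forall>k\<le>d. \<forall>j\<ge>1. \<delta> k j \<in> borel_measurable M"
    and sq_int: "\<forall>k\<le>d. \<forall>j\<ge>1. integrable M (\<lambda>\<omega>. (\<delta> k j \<omega>)^2)"
    and mean0: "\<forall>k\<le>d. \<forall>j\<ge>1. integrable M (\<delta> k j) \<and> (\<integral>\<omega>. \<delta> k j \<omega> \<partial>M) = 0"
    and "n > 0" and "S2 x n > 0"
  defines "Z \<equiv> \<lambda>\<omega>. \<Sum>i\<le>d+1. (ls_fit d x n (\<lambda>k j. \<delta> k j \<omega>) i)^2"
  shows "integrable M Z"
    and "(\<integral>\<omega>. Z \<omega> \<partial>M) \<le> nu_max ((d+1)*n) (cov_matrix M d \<delta>)
           * (real (d+1) / real n + (xbar x n)^2 / (real n * S2 x n) + 1 / (real (d+1) * real n * S2 x n))"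
proof -
  have Z: "Z = (\<lambda>\<omega>. \<Sum>i\<le>d+1. (\<Sum>k\<le>d. \<Sum>j=1..n. lse_weight d x n i k j * \<delta> k j \<omega>)^2)"
    by (simp add: Z_def ls_fit_def)
  note moment = second_moment_weighted_errors[OF rv sq_int mean0 \<open>n > 0\<close>, of "lse_weight d x n _"]
  show "integrable M Z"
    unfolding Z using moment(1) by auto
  have "(\<integral>\<omega>. Z \<omega> \<partial>M)
      = (\<Sum>i\<le>d+1. \<integral>\<omega>. (\<Sum>k\<le>d. \<Sum>j=1..n. lse_weight d x n i k j * \<delta> k j \<omega>)^2 \<partial>M)"
    unfolding Z by (rule Bochner_Integration.integral_sum) (rule moment(1))
  also have "\<dots> \<le> (\<Sum>i\<le>d+1. nu_max ((d+1)*n) (cov_matrix M d \<delta>)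
                      * (\<Sum>k\<le>d. \<Sum>j=1..n. (lse_weight d x n i k j)^2))"
    by (intro sum_mono moment(2))
  also have "\<dots> = nu_max ((d+1)*n) (cov_matrix M d \<delta>)
           * (real (d+1) / real n + (xbar x n)^2 / (real n * S2 x n) + 1 / (real (d+1) * real n * S2 x n))"
    using assms(4,5) by (simp add: sum_square_lse_weights flip: sum_distrib_left)
  finally show "(\<integral>\<omega>. Z \<omega> \<partial>M) \<le> nu_max ((d+1)*n) (cov_matrix M d \<delta>)
           * (real (d+1) / real n + (xbar x n)^2 / (real n * S2 x n) + 1 / (real (d+1) * real n * S2 x n))" .
qed

lemma measure_sqrt_gt_le:
  fixes Z :: "'a \<Rightarrow> real"
  assumes "finite_measure M" and "integrable M Z" and "\<And>\<omega>. 0 \<le> Z \<omega>" and "e > 0"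
  shows "measure M {\<omega>\<in>space M. e < sqrt (Z \<omega>)} \<le> (\<integral>\<omega>. Z \<omega> \<partial>M) / e^2"
proof -
  have [measurable]: "Z \<in> borel_measurable M" using assms(2) by auto
  have "measure M {\<omega>\<in>space M. e < sqrt (Z \<omega>)} \<le> measure M {\<omega>\<in>space M. e^2 \<le> Z \<omega>}"
  proof (rule finite_measure.finite_measure_mono[OF assms(1)])
    have "e^2 \<le> Z \<omega>" if "e < sqrt (Z \<omega>)" for \<omega>
    proof -
      have "e^2 < (sqrt (Z \<omega>))^2"
        using that \<open>e > 0\<close> by (intro power_strict_mono) auto
      then show ?thesis using assms(3)[of \<omega>] by simp
    qed
    then show "{\<omega>\<in>space M. e < sqrt (Z \<omega>)} \<subseteq> {\<omega>\<in>space M. e^2 \<le> Z \<omega>}"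
      by auto
  qed measurable
  also have "\<dots> \<le> (\<integral>\<omega>. Z \<omega> \<partial>M) / e^2"
    using assms by (intro integral_Markov_inequality_measure) auto
  finally show ?thesis .
qed

lemma lse_variance_le_bound:
  fixes D n S X \<nu> e :: real
  assumes "D \<ge> 1" and "n > 0" and "S > 0" and "X \<ge> 0" and "\<nu> \<ge> 0" and "e > 0"
  shows "\<nu> * (D / n + X / (n * S) + 1 / (D * n * S)) / e^2
           \<le> 4 * \<nu> / (e^2 * D * n) * (1 + X + S) * (1 / S + D * (1 + X / S))^2"
proof -
  define T where "T = 1 / S + D * (1 + X / S)"
  have XS: "0 \<le> X / S" using assms by simp
  have "D \<le> T"
    using assms XS by (simp add: T_def algebra_simps)
  have "D / n + X / (n * S) + 1 / (D * n * S) = (D * D + D * (X / S) + 1 / S) / (D * n)"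
    using assms by (simp add: field_simps)
  also have "\<dots> \<le> (D * T) / (D * n)"
  proof (rule divide_right_mono)
    have "X / S \<le> D * (X / S)"
      using mult_right_mono[of 1 D "X / S"] assms XS by simp
    then have "D * (X / S) \<le> D * (D * (X / S))"
      using assms by (intro mult_left_mono) auto
    moreover have "1 / S \<le> D / S"
      using assms by (simp add: divide_right_mono)
    ultimately show "D * D + D * (X / S) + 1 / S \<le> D * T"
      by (simp add: T_def algebra_simps)
  qed (use assms in simp)
  also have "\<dots> \<le> 4 * (1 + X + S) * T^2 / (D * n)"
  proof (rule divide_right_mono)
    have "D * T \<le> T * T" using \<open>D \<le> T\<close> assms by (intro mult_right_mono) auto
    also have "\<dots> \<le> 4 * (1 + X + S) * T^2"
      using assms by (simp add: power2_eq_square mult_le_cancel_right1)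
    finally show "D * T \<le> 4 * (1 + X + S) * T^2" .
  qed (use assms in simp)
  finally have "\<nu> * (D / n + X / (n * S) + 1 / (D * n * S)) / e^2
      \<le> \<nu> * (4 * (1 + X + S) * T^2 / (D * n)) / e^2"
    using assms by (intro divide_right_mono mult_left_mono) auto
  then show ?thesis by (simp add: T_def field_simps)
qed

lemma lse_deviation_prob_le:
  fixes M :: "'a measure" and \<delta> :: "nat \<Rightarrow> nat \<Rightarrow> 'a \<Rightarrow> real" and x :: "nat \<Rightarrow> real"
  assumes "prob_space M"
    and rv: "\<forall>k\<le>d. \<forall>j\<ge>1. \<delta> k j \<in> borel_measurable M"
    and sq_int: "\<forall>k\<le>d. \<forall>j\<ge>1. integrable M (\<lambda>\<omega>. (\<delta> k j \<omega>)^2)"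
    and mean0: "\<forall>k\<le>d. \<forall>j\<ge>1. integrable M (\<delta> k j) \<and> (\<integral>\<omega>. \<delta> k j \<omega> \<partial>M) = 0"
    and nu: "nu_max ((d+1)*n) (cov_matrix M d \<delta>) \<le> \<nu>"
    and "n \<ge> 2" and "x 1 \<noteq> x 2" and "e > 0"
  shows "measure M {\<omega>\<in>space M. pdist d (lse d x (\<lambda>k j. \<beta> k + s * x j + \<delta> k j \<omega>) n)
             (\<lambda>i. if i \<le> d then \<beta> i else if i = d+1 then s else 0) > e}
     \<le> 4 * \<nu> / (e^2 * real (d+1) * real n) * (1 + (xbar x n)^2 + S2 x n)
         * (1 / S2 x n + real (d+1) * (1 + (xbar x n)^2 / S2 x n))^2"
proof -
  have "n > 0" "S2 x n > 0" using assms S2_pos by auto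
  define Z where "Z \<omega> = (\<Sum>i\<le>d+1. (ls_fit d x n (\<lambda>k j. \<delta> k j \<omega>) i)^2)" for \<omega>
  define W where "W = real (d+1) / real n + (xbar x n)^2 / (real n * S2 x n)
                        + 1 / (real (d+1) * real n * S2 x n)"
  note moment = second_moment_ls_fit_errors[OF rv sq_int mean0 \<open>n > 0\<close> \<open>S2 x n > 0\<close>,
      folded Z_def[abs_def] W_def]
  have dist: "pdist d (lse d x (\<lambda>k j. \<beta> k + s * x j + \<delta> k j \<omega>) n)
      (\<lambda>i. if i \<le> d then \<beta> i else if i = d+1 then s else 0) = sqrt (Z \<omega>)" for \<omega>
    using lse_error_eq_ls_fit[OF \<open>n \<ge> 2\<close> \<open>x 1 \<noteq> x 2\<close>, where \<delta>="\<lambda>k j. \<delta> k j \<omega>"]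
    by (simp add: pdist_def Z_def atLeast0AtMost)
  have "0 \<le> cov_matrix M d \<delta> 0 0"
    by (simp add: cov_matrix_def covar_def)
  also have "\<dots> \<le> nu_max ((d+1)*n) (cov_matrix M d \<delta>)"
    using \<open>n > 0\<close> by (intro diag_le_nu_max) (auto simp: cov_matrix_sym)
  finally have "0 \<le> \<nu>" using nu by linarith
  have "0 \<le> W"
    unfolding W_def using \<open>S2 x n > 0\<close> by (intro add_nonneg_nonneg) auto
  have "measure M {\<omega>\<in>space M. e < sqrt (Z \<omega>)} \<le> (\<integral>\<omega>. Z \<omega> \<partial>M) / e^2"
    by (rule measure_sqrt_gt_le[OF _ moment(1) _ \<open>e > 0\<close>])
       (use assms(1) in \<open>auto simp: prob_space_def Z_def intro: sum_nonneg\<close>)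
  also have "\<dots> \<le> \<nu> * W / e^2"
  proof (rule divide_right_mono)
    show "(\<integral>\<omega>. Z \<omega> \<partial>M) \<le> \<nu> * W"
      using moment(2) mult_right_mono[OF nu \<open>0 \<le> W\<close>] by linarith
  qed simp
  also have "\<dots> \<le> 4 * \<nu> / (e^2 * real (d+1) * real n) * (1 + (xbar x n)^2 + S2 x n)
         * (1 / S2 x n + real (d+1) * (1 + (xbar x n)^2 / S2 x n))^2"
    unfolding W_def using \<open>0 \<le> \<nu>\<close> \<open>e > 0\<close> \<open>n > 0\<close> \<open>S2 x n > 0\<close>
    by (intro lse_variance_le_bound) auto
  finally show ?thesis by (simp only: dist)
qed

section \<open>Rate of convergence\<close>

lemma nat_powr_bigo_mono: "a \<le> b \<Longrightarrow> (\<lambda>n::nat. real n powr a) \<in> O(\<lambda>n. real n powr b)"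
  using powr_bigo_iff[OF filterlim_real_sequentially] by simp

lemma one_bigo_nat_powr: "a \<ge> 0 \<Longrightarrow> (\<lambda>_. 1) \<in> O(\<lambda>n::nat. real n powr a)"
proof -
  have "(\<lambda>_. 1) \<in> O(\<lambda>n::nat. real n powr 0)"
    by (intro bigoI[of _ 1] eventually_mono[OF eventually_gt_at_top[of 0]]) simp
  then show "a \<ge> 0 \<Longrightarrow> ?thesis" by (rule landau_o.big_trans[OF _ nat_powr_bigo_mono])
qed

lemma inverse_bigo_nat_powr:
  assumes "f \<in> \<Theta>(\<lambda>n::nat. real n powr a)"
  shows "(\<lambda>n. 1 / f n) \<in> O(\<lambda>n. real n powr (-a))"
proof -
  have "(\<lambda>n. inverse (f n)) \<in> \<Theta>(\<lambda>n. inverse (real n powr a))"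
    using assms by (simp only: bigtheta_inverse)
  then show ?thesis by (simp add: powr_minus inverse_eq_divide bigthetaD1)
qed

lemma square_bigo_nat_powr:
  assumes "f \<in> O(\<lambda>n::nat. real n powr (a/2))"
  shows "(\<lambda>n. (f n)^2) \<in> O(\<lambda>n. real n powr a)"
proof -
  have "(\<lambda>n. (f n)^2) \<in> O(\<lambda>n. (real n powr (a/2))^2)"
    using assms by (rule landau_o.big_power)
  also have "(\<lambda>n. (real n powr (a/2))^2) = (\<lambda>n. real n powr a)"
    by (simp add: power2_eq_square flip: powr_add)
  finally show ?thesis .
qed

lemma lse_bound_first_factor_bigo:
  assumes "\<gamma> \<ge> 0" and S: "S2 x \<in> \<Theta>(\<lambda>n. real n powr \<gamma>)"
    and X: "xbar x \<in> O(\<lambda>n. real n powr (\<mu>/2))"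
  shows "(\<lambda>n. 1 + (xbar x n)^2 + S2 x n) \<in> O(\<lambda>n. real n powr max \<gamma> \<mu>)"
proof -
  have "(\<lambda>_. 1) \<in> O(\<lambda>n. real n powr max \<gamma> \<mu>)"
    by (rule one_bigo_nat_powr) (simp add: \<open>\<gamma> \<ge> 0\<close> le_max_iff_disj)
  moreover have "(\<lambda>n. (xbar x n)^2) \<in> O(\<lambda>n. real n powr max \<gamma> \<mu>)"
    by (rule landau_o.big_trans[OF square_bigo_nat_powr[OF X] nat_powr_bigo_mono]) simp
  moreover have "S2 x \<in> O(\<lambda>n. real n powr max \<gamma> \<mu>)"
    by (rule landau_o.big_trans[OF bigthetaD1[OF S] nat_powr_bigo_mono]) simp
  ultimately show ?thesis
    by (intro sum_in_bigo)
qed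

lemma lse_bound_second_factor_bigo:
  assumes "\<gamma> \<ge> 0" and S: "S2 x \<in> \<Theta>(\<lambda>n. real n powr \<gamma>)"
    and X: "xbar x \<in> O(\<lambda>n. real n powr (\<mu>/2))"
  shows "(\<lambda>n. 1 / S2 x n + D * (1 + (xbar x n)^2 / S2 x n)) \<in> O(\<lambda>n. real n powr max 0 (\<mu> - \<gamma>))"
proof -
  note inv_S = inverse_bigo_nat_powr[OF S]
  have "(\<lambda>n. (xbar x n)^2 * (1 / S2 x n)) \<in> O(\<lambda>n. real n powr \<mu> * real n powr (-\<gamma>))"
    using square_bigo_nat_powr[OF X] inv_S by (rule landau_o.big.mult)
  also have "(\<lambda>n. real n powr \<mu> * real n powr (-\<gamma>)) \<in> O(\<lambda>n. real n powr max 0 (\<mu> - \<gamma>))"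
    unfolding powr_add[symmetric] by (rule nat_powr_bigo_mono) simp
  finally have "(\<lambda>n. (xbar x n)^2 / S2 x n) \<in> O(\<lambda>n. real n powr max 0 (\<mu> - \<gamma>))"
    by simp
  moreover have "(\<lambda>_. 1) \<in> O(\<lambda>n. real n powr max 0 (\<mu> - \<gamma>))"
    by (rule one_bigo_nat_powr) simp
  moreover have "(\<lambda>n. 1 / S2 x n) \<in> O(\<lambda>n. real n powr max 0 (\<mu> - \<gamma>))"
    by (rule landau_o.big_trans[OF inv_S nat_powr_bigo_mono]) (simp add: \<open>\<gamma> \<ge> 0\<close> le_max_iff_disj)
  ultimately show ?thesis
    by (simp add: sum_in_bigo)
qed

lemma lse_bound_bigo:
  fixes x :: "nat \<Rightarrow> real" and c D \<gamma> \<mu> :: real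
  assumes "\<gamma> \<ge> 0"
    and S: "S2 x \<in> \<Theta>(\<lambda>n. real n powr \<gamma>)"
    and X: "xbar x \<in> O(\<lambda>n. real n powr (\<mu>/2))"
  shows "(\<lambda>n. c / real n * (1 + (xbar x n)^2 + S2 x n) * (1 / S2 x n + D * (1 + (xbar x n)^2 / S2 x n))^2)
           \<in> O(\<lambda>n. real n powr (-(1 - max \<gamma> \<mu> - 2 * max 0 (\<mu> - \<gamma>))))"
proof -
  have "(\<lambda>n. c / real n) \<in> O(\<lambda>n. real n powr (-1))"
    by (intro bigoI[of _ "\<bar>c\<bar>"] eventually_mono[OF eventually_gt_at_top[of 0]])
       (simp add: powr_neg_one)
  then have "(\<lambda>n. c / real n * (1 + (xbar x n)^2 + S2 x n) * (1 / S2 x n + D * (1 + (xbar x n)^2 / S2 x n))^2)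
      \<in> O(\<lambda>n. real n powr (-1) * real n powr max \<gamma> \<mu> * (real n powr max 0 (\<mu> - \<gamma>))^2)"
    using lse_bound_first_factor_bigo[OF assms]
      landau_o.big_power[OF lse_bound_second_factor_bigo[OF assms, where D=D], where m=2]
    by (intro landau_o.big.mult)
  also have "(\<lambda>n. real n powr (-1) * real n powr max \<gamma> \<mu> * (real n powr max 0 (\<mu> - \<gamma>))^2)
      = (\<lambda>n. real n powr (-(1 - max \<gamma> \<mu> - 2 * max 0 (\<mu> - \<gamma>))))"
    by (intro ext, simp only: power2_eq_square powr_add[symmetric]) (simp add: algebra_simps)
  finally show ?thesis .
qed

theorem mainTheorem5:
  fixes M :: "'a measure" and d :: nat and \<beta> :: "nat \<Rightarrow> real" and s :: real
    and eps :: "nat \<Rightarrow> real" and \<delta> :: "nat \<Rightarrow> nat \<Rightarrow> 'a \<Rightarrow> real" and nu_star :: real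
  assumes prob: "prob_space M"
    and eps_pos: "\<forall>j\<ge>1. eps j > 0"
    and eps_decr: "\<forall>i j. 1 \<le> i \<longrightarrow> i < j \<longrightarrow> eps j < eps i"
    and rv: "\<forall>k\<le>d. \<forall>j\<ge>1. \<delta> k j \<in> borel_measurable M"
    and sq_int: "\<forall>k\<le>d. \<forall>j\<ge>1. integrable M (\<lambda>\<omega>. (\<delta> k j \<omega>)^2)"
    and mean0: "\<forall>k\<le>d. \<forall>j\<ge>1. integrable M (\<delta> k j) \<and> (\<integral>\<omega>. \<delta> k j \<omega> \<partial>M) = 0"
    and var_pos: "\<forall>k\<le>d. \<forall>j\<ge>1. covar M (\<delta> k j) (\<delta> k j) > 0"
    and Q_inf: "\<exists>c>0. \<forall>n\<ge>1. c \<le> nu_min ((d+1)*n) (cov_matrix M d \<delta>)"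
    and Q_bdd: "bdd_above ((\<lambda>n. nu_max ((d+1)*n) (cov_matrix M d \<delta>)) ` {1..})"
    and nu_star_def: "nu_star = (SUP n\<in>{1..}. nu_max ((d+1)*n) (cov_matrix M d \<delta>))"
  defines "x \<equiv> (\<lambda>j. - ln (eps j))"
    and "y \<equiv> (\<lambda>\<omega> k j. \<beta> k + s * (- ln (eps j)) + \<delta> k j \<omega>)"
    and "\<beta>vec \<equiv> (\<lambda>i. if i \<le> d then \<beta> i else if i = d+1 then s else 0)"
  shows "(\<forall>e>0. \<forall>n\<ge>2.
            measure M {\<omega>\<in>space M. pdist d (lse d x (y \<omega>) n) \<beta>vec > e}
            \<le> 4 * nu_star / (e^2 * real (d+1) * real n)
               * (1 + (xbar x n)^2 + S2 x n)
               * (1 / S2 x n + real (d+1) * (1 + (xbar x n)^2 / S2 x n))^2)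
       \<and> (\<forall>\<gamma> \<mu>::real. \<gamma> \<ge> 0 \<longrightarrow> \<mu> \<ge> 0 \<longrightarrow>
            S2 x \<in> \<Theta>(\<lambda>n. real n powr \<gamma>) \<longrightarrow>
            xbar x \<in> O(\<lambda>n. real n powr (\<mu>/2)) \<longrightarrow>
            1 - max \<gamma> \<mu> - 2 * max 0 (\<mu> - \<gamma>) > 0 \<longrightarrow>
            (\<forall>e>0. (\<lambda>n. measure M {\<omega>\<in>space M. pdist d (lse d x (y \<omega>) n) \<beta>vec > e})
                     \<in> O(\<lambda>n. real n powr (-(1 - max \<gamma> \<mu> - 2 * max 0 (\<mu> - \<gamma>))))))"
proof -
  have x12: "x 1 \<noteq> x 2"
    using eps_pos eps_decr[rule_format, of 1 2] by (simp add: x_def)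
  have y: "y \<omega> = (\<lambda>k j. \<beta> k + s * x j + \<delta> k j \<omega>)" for \<omega>
    by (simp add: y_def x_def)
  have nu: "nu_max ((d+1)*n) (cov_matrix M d \<delta>) \<le> nu_star" if "n \<ge> 1" for n
    unfolding nu_star_def using Q_bdd that by (intro cSUP_upper) auto
  define P where "P e n = measure M {\<omega>\<in>space M. pdist d (lse d x (y \<omega>) n) \<beta>vec > e}" for e n
  define B where "B e n = 4 * nu_star / (e^2 * real (d+1)) / real n * (1 + (xbar x n)^2 + S2 x n)
                    * (1 / S2 x n + real (d+1) * (1 + (xbar x n)^2 / S2 x n))^2" for e n
  have bound: "P e n \<le> B e n" if "e > 0" and "n \<ge> 2" for e n
    using lse_deviation_prob_le[OF prob rv sq_int mean0 nu _ x12 that(1)] that(2)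
    by (simp add: P_def B_def y \<beta>vec_def divide_divide_eq_left)
  have rate: "P e \<in> O(\<lambda>n. real n powr (-(1 - max \<gamma> \<mu> - 2 * max 0 (\<mu> - \<gamma>))))"
    if "e > 0" "\<gamma> \<ge> 0" "\<mu> \<ge> 0" "S2 x \<in> \<Theta>(\<lambda>n. real n powr \<gamma>)"
      "xbar x \<in> O(\<lambda>n. real n powr (\<mu>/2))" for e \<gamma> \<mu>
  proof -
    have "P e \<in> O(B e)"
      using bound[OF \<open>e > 0\<close>]
      by (intro landau_o.big_mono eventually_mono[OF eventually_ge_at_top[of 2]])
         (auto simp: P_def intro: order.trans[OF _ abs_ge_self])
    also have "B e \<in> O(\<lambda>n. real n powr (-(1 - max \<gamma> \<mu> - 2 * max 0 (\<mu> - \<gamma>))))"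
      unfolding B_def[abs_def] using that(2,4,5) by (rule lse_bound_bigo)
    finally show ?thesis .
  qed
  show ?thesis
    using bound rate by (simp add: P_def[abs_def] B_def divide_divide_eq_left)
qed

end
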